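(* Let $Q=(q_n)$ be a basic sequence with $\lim_{N\to\infty}\frac1N\sum_{n=1}^N\frac1{q_n}=0$, and let $x=E_0.E_1E_2\cdots$ (w.r.t. $Q$) be $Q$-distribution normal. If $y=F_0.F_1F_2\cdots$ (w.r.t. $Q$) satisfies $\lim_{n\to\infty}\frac{|E_n-F_n|}{q_n}=0$, then $y$ is $Q$-distribution normal.
   Context: A basic sequence is a sequence $Q=(q_n)_{n\ge1}$ of integers with $q_n\ge2$. The $Q$-Cantor series expansion of a real $x$ is the unique expansion $x=E_0+\sum_{n\ge1}\frac{E_n}{q_1\cdots q_n}$ with $E_0=\lfloor x\rfloor$, $E_n\in\{0,\dots,q_n-1\}$ and $E_n\ne q_n-1$ infinitely often; written $x=E_0.E_1E_2\cdots$ w.r.t. $Q$. Let $T_{Q,n}(x)=\left(\prod_{j=1}^n q_j\right)x \bmod 1$. A real $x$ is $Q$-distribution normal if $(T_{Q,n}(x))_{n\ge0}$ is uniformly distributed modulo $1$. *)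

theory Defs
  imports "HOL-Analysis.Analysis"
begin

text \<open>A basic sequence is indexed from 1: q 1, q 2, ...; the value q 0 is irrelevant.\<close>
definition basic_seq :: "(nat \<Rightarrow> nat) \<Rightarrow> bool" where
  "basic_seq q \<longleftrightarrow> (\<forall>n\<ge>1. q n \<ge> 2)"

definition Qprod :: "(nat \<Rightarrow> nat) \<Rightarrow> nat \<Rightarrow> nat" where
  "Qprod q n = (\<Prod>j=1..n. q j)"

definition cantor_expansion :: "(nat \<Rightarrow> nat) \<Rightarrow> real \<Rightarrow> (nat \<Rightarrow> int) \<Rightarrow> bool" where
  "cantor_expansion q x E \<longleftrightarrow>
     E 0 = \<lfloor>x\<rfloor> \<and>
     (\<forall>n\<ge>1. 0 \<le> E n \<and> E n \<le> int (q n) - 1) \<and>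
     (\<lambda>n. real_of_int (E (Suc n)) / real (Qprod q (Suc n))) sums (x - real_of_int (E 0)) \<and>
     (\<exists>\<^sub>\<infinity>n. E n \<noteq> int (q n) - 1)"

definition T_Q :: "(nat \<Rightarrow> nat) \<Rightarrow> nat \<Rightarrow> real \<Rightarrow> real" where
  "T_Q q n x = frac (real (Qprod q n) * x)"

definition unif_distr_mod1 :: "(nat \<Rightarrow> real) \<Rightarrow> bool" where
  "unif_distr_mod1 s \<longleftrightarrow>
     (\<forall>a b. 0 \<le> a \<and> a < b \<and> b \<le> 1 \<longrightarrow>
        (\<lambda>N. real (card {n. n < N \<and> a \<le> frac (s n) \<and> frac (s n) < b}) / real N)
          \<longlonglongrightarrow> b - a)"

definition Q_distribution_normal :: "(nat \<Rightarrow> nat) \<Rightarrow> real \<Rightarrow> bool" where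
  "Q_distribution_normal q x \<longleftrightarrow> unif_distr_mod1 (\<lambda>n. T_Q q n x)"

end

theory Submission
  imports Defs
begin

(*
  The n-th iterate T_{Q,n}(x) is the scaled tail of the Cantor series of x,
  T_{Q,n}(x) = (E_{n+1} + T_{Q,n+1}(x)) / q_{n+1}, and lies in [0,1).
  Comparing two expansions digit by digit therefore gives
    |T_{Q,n}(x) - T_{Q,n}(y)| <= |E_{n+1} - F_{n+1}| / q_{n+1} + 1 / q_{n+1}.
  Both terms on the right have Cesaro mean tending to 0: the first because it
  tends to 0 itself, the second by hypothesis.  Finally, uniform distribution
  modulo 1 is stable under perturbations whose mean distance tends to 0: by a
  Markov-type count only a density-zero set of indices moves by more than
  delta, and the remaining indices stay in a window enlarged by delta.
*)

lemma basic_seq_pos: "basic_seq q \<Longrightarrow> n \<ge> 1 \<Longrightarrow> real (q n) > 0"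
  unfolding basic_seq_def by (metis of_nat_0_less_iff order_less_le_trans pos2)

lemma Qprod_Suc: "Qprod q (Suc n) = Qprod q n * q (Suc n)"
  unfolding Qprod_def by (simp add: prod.nat_ivl_Suc' mult.commute)

lemma Qprod_pos: "basic_seq q \<Longrightarrow> real (Qprod q n) > 0"
  unfolding Qprod_def using basic_seq_pos by (force intro: prod_pos)

lemma Qprod_dvd: "m \<le> n \<Longrightarrow> Qprod q m dvd Qprod q n"
  unfolding Qprod_def by (intro prod_dvd_prod_subset) auto

lemma Qprod_ge_pow2:
  assumes "basic_seq q" shows "real (Qprod q n) \<ge> 2 ^ n"
proof (induction n)
  case 0 then show ?case by (simp add: Qprod_def)
next
  case (Suc n)
  have "2 \<le> real (q (Suc n))" using assms by (simp add: basic_seq_def)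
  with Suc have "2 ^ n * 2 \<le> real (Qprod q n) * real (q (Suc n))"
    by (intro mult_mono) auto
  then show ?case by (simp add: Qprod_Suc mult.commute)
qed

(* The scaled tail Q_n * sum_{k>n} E_k / Q_k of a Cantor series; it will turn
   out to be T_{Q,n}(x). *)
definition cantor_tail :: "(nat \<Rightarrow> nat) \<Rightarrow> (nat \<Rightarrow> int) \<Rightarrow> nat \<Rightarrow> real" where
  "cantor_tail q E n =
     real (Qprod q n) * (\<Sum>k. real_of_int (E (Suc (k + n))) / real (Qprod q (Suc (k + n))))"

lemma cantor_digits:
  assumes "cantor_expansion q x E" "n \<ge> 1"
  shows "0 \<le> E n" "E n \<le> int (q n) - 1"
  using assms unfolding cantor_expansion_def by auto

lemma cantor_terms_sums:
  assumes "cantor_expansion q x E"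
  shows "(\<lambda>k. real_of_int (E (Suc k)) / real (Qprod q (Suc k))) sums (x - real_of_int (E 0))"
  using assms unfolding cantor_expansion_def by auto

lemma cantor_tail_summable:
  assumes "cantor_expansion q x E"
  shows "summable (\<lambda>k. real_of_int (E (Suc (k + n))) / real (Qprod q (Suc (k + n))))"
  using summable_ignore_initial_segment[OF sums_summable[OF cantor_terms_sums[OF assms]], of n]
  by simp

(* Telescoping: the tail built from the maximal digits q_k - 1 sums exactly
   to 1 / Q_n.  This is the bound the tail of a genuine expansion must stay below. *)
lemma maximal_digits_sums:
  assumes "basic_seq q"
  shows "(\<lambda>k. (real (q (Suc (k + n))) - 1) / real (Qprod q (Suc (k + n)))) sums (1 / real (Qprod q n))"
proof -
  have "(\<lambda>k. 1 / real (Qprod q (k + n))) \<longlonglongrightarrow> 0"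
  proof (rule tendsto_sandwich[of "\<lambda>_. 0" _ _ "\<lambda>k. (1/2) ^ (k + n)"])
    show "\<forall>\<^sub>F k in sequentially. 1 / real (Qprod q (k + n)) \<le> (1/2) ^ (k + n)"
      using Qprod_ge_pow2[OF assms] by (simp add: power_one_over frac_le)
    show "(\<lambda>k. (1/2::real) ^ (k + n)) \<longlonglongrightarrow> 0"
      by (rule LIMSEQ_ignore_initial_segment) (simp add: LIMSEQ_realpow_zero)
  qed (use Qprod_pos[OF assms] in \<open>auto simp: less_imp_le\<close>)
  from telescope_sums'[OF this]
  have "(\<lambda>k. 1 / real (Qprod q (k + n)) - 1 / real (Qprod q (Suc (k + n)))) sums (1 / real (Qprod q n))"
    by simp
  moreover have "1 / real (Qprod q (k + n)) - 1 / real (Qprod q (Suc (k + n)))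
      = (real (q (Suc (k + n))) - 1) / real (Qprod q (Suc (k + n)))" for k
    using Qprod_pos[OF assms, of "k + n"] basic_seq_pos[OF assms, of "Suc (k + n)"]
    by (simp add: Qprod_Suc field_simps)
  ultimately show ?thesis by simp
qed

lemma cantor_tail_nonneg:
  assumes "basic_seq q" "cantor_expansion q x E"
  shows "cantor_tail q E n \<ge> 0"
  unfolding cantor_tail_def using Qprod_pos[OF assms(1)] cantor_digits(1)[OF assms(2)]
  by (intro mult_nonneg_nonneg suminf_nonneg cantor_tail_summable[OF assms(2)]) auto

(* The tail is strictly below 1: its digits are bounded by the maximal ones,
   and strictly so infinitely often (the uniqueness condition of the expansion). *)
lemma cantor_tail_less_1:
  assumes bq: "basic_seq q" and ce: "cantor_expansion q x E"
  shows "cantor_tail q E n < 1"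
proof -
  define u where "u k = real_of_int (E (Suc (k + n))) / real (Qprod q (Suc (k + n)))" for k
  define g where "g k = (real (q (Suc (k + n))) - 1) / real (Qprod q (Suc (k + n)))" for k
  have g_sums: "g sums (1 / real (Qprod q n))"
    unfolding g_def by (rule maximal_digits_sums[OF bq])
  have u_le_g: "u k \<le> g k" for k
    using cantor_digits(2)[OF ce, of "Suc (k + n)"] Qprod_pos[OF bq]
    unfolding u_def g_def by (intro divide_right_mono) linarith+
  obtain i where i: "i > n" "E i \<noteq> int (q i) - 1"
    using ce unfolding cantor_expansion_def INFM_nat by blast
  then obtain k where k: "i = Suc (k + n)" by (metis less_imp_Suc_add add.commute)
  have "u k < g k"
    using cantor_digits(2)[OF ce, of i] i Qprod_pos[OF bq]
    unfolding u_def g_def k by (intro divide_strict_right_mono) linarith+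
  moreover have u_summable: "summable u"
    unfolding u_def by (rule cantor_tail_summable[OF ce])
  ultimately have "0 < (\<Sum>k. g k - u k)"
    using u_le_g g_sums by (intro suminf_pos2) (auto intro: summable_diff simp: sums_iff)
  also have "\<dots> = (\<Sum>k. g k) - (\<Sum>k. u k)"
    using g_sums u_summable suminf_diff[of g u] by (simp add: sums_iff)
  finally have "real (Qprod q n) * (\<Sum>k. u k) < real (Qprod q n) * (\<Sum>k. g k)"
    using Qprod_pos[OF bq, of n] by simp
  also have "\<dots> = 1"
    using g_sums Qprod_pos[OF bq, of n] by (simp add: sums_iff)
  finally show ?thesis unfolding cantor_tail_def u_def .
qed

(* Q_n x differs from the n-th tail by the integer Q_n (E_0 + sum_{k<=n} E_k/Q_k),
   because Q_k divides Q_n for k <= n. *)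
lemma cantor_scaled_minus_tail_Ints:
  assumes bq: "basic_seq q" and ce: "cantor_expansion q x E"
  shows "real (Qprod q n) * x - cantor_tail q E n \<in> \<int>"
proof -
  define u where "u k = real_of_int (E (Suc k)) / real (Qprod q (Suc k))" for k
  have "x - real_of_int (E 0) = (\<Sum>k. u (k + n)) + (\<Sum>k<n. u k)"
    using suminf_split_initial_segment[OF sums_summable, of u] cantor_terms_sums[OF ce]
    unfolding u_def by (simp add: sums_iff)
  then have eq: "real (Qprod q n) * x - cantor_tail q E n
      = real (Qprod q n) * real_of_int (E 0) + (\<Sum>k<n. real (Qprod q n) * u k)"
    unfolding cantor_tail_def u_def by (simp add: algebra_simps sum_distrib_left)
  have "real (Qprod q n) * u k \<in> \<int>" if "k < n" for k
  proof -
    have "Qprod q (Suc k) dvd Qprod q n" using that by (intro Qprod_dvd) simp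
    then obtain c where "Qprod q n = Qprod q (Suc k) * c" by (elim dvdE)
    then have "real (Qprod q n) * u k = real_of_int (E (Suc k)) * real c"
      unfolding u_def using Qprod_pos[OF bq, of "Suc k"] by (simp add: field_simps)
    then show ?thesis by simp
  qed
  then show ?thesis unfolding eq by (auto intro!: Ints_add Ints_sum)
qed

lemma T_Q_eq_cantor_tail:
  assumes "basic_seq q" "cantor_expansion q x E"
  shows "T_Q q n x = cantor_tail q E n"
proof -
  obtain m where m: "real (Qprod q n) * x = of_int m + cantor_tail q E n"
    using cantor_scaled_minus_tail_Ints[OF assms, of n]
    by (metis Ints_cases add.commute diff_eq_eq)
  show ?thesis
    unfolding T_Q_def m using cantor_tail_nonneg[OF assms] cantor_tail_less_1[OF assms]
    by (simp add: frac_eq)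
qed

lemma cantor_tail_Suc:
  assumes bq: "basic_seq q" and ce: "cantor_expansion q x E"
  shows "cantor_tail q E n = (real_of_int (E (Suc n)) + cantor_tail q E (Suc n)) / real (q (Suc n))"
proof -
  define u where "u k = real_of_int (E (Suc (k + n))) / real (Qprod q (Suc (k + n)))" for k
  have "(\<Sum>k. u k) = u 0 + (\<Sum>k. u (Suc k))"
    using suminf_split_head[OF cantor_tail_summable[OF ce, of n]] unfolding u_def by simp
  then show ?thesis
    using Qprod_pos[OF bq, of n] basic_seq_pos[OF bq, of "Suc n"]
    unfolding cantor_tail_def u_def by (simp add: Qprod_Suc field_simps)
qed

lemma frac_T_Q: "frac (T_Q q n x) = T_Q q n x"
  by (simp add: T_Q_def frac_eq frac_lt_1)

(* Key estimate: two iterates differ by at most the digit difference plus one,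
   divided by the next base, since the two following tails lie in [0,1). *)
lemma T_Q_dist_bound:
  assumes bq: "basic_seq q" and ce: "cantor_expansion q x E" and cf: "cantor_expansion q y F"
  shows "\<bar>T_Q q n x - T_Q q n y\<bar> \<le> (\<bar>real_of_int (E (Suc n) - F (Suc n))\<bar> + 1) / real (q (Suc n))"
proof -
  let ?D = "cantor_tail q E (Suc n) - cantor_tail q F (Suc n)"
  have "T_Q q n x - T_Q q n y = (real_of_int (E (Suc n) - F (Suc n)) + ?D) / real (q (Suc n))"
    unfolding T_Q_eq_cantor_tail[OF bq ce] T_Q_eq_cantor_tail[OF bq cf]
      cantor_tail_Suc[OF bq ce, of n] cantor_tail_Suc[OF bq cf, of n]
    by (simp add: diff_divide_distrib add_divide_distrib)
  moreover have "\<bar>?D\<bar> < 1"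
    using cantor_tail_nonneg[OF bq ce, of "Suc n"] cantor_tail_less_1[OF bq ce, of "Suc n"]
      cantor_tail_nonneg[OF bq cf, of "Suc n"] cantor_tail_less_1[OF bq cf, of "Suc n"]
    by (simp add: abs_less_iff)
  ultimately show ?thesis
    using basic_seq_pos[OF bq, of "Suc n"]
    by (simp add: divide_right_mono abs_triangle_ineq[THEN order_trans])
qed

definition avg :: "(nat \<Rightarrow> real) \<Rightarrow> nat \<Rightarrow> real" where
  "avg d N = (\<Sum>n<N. d n) / real N"

lemma avg_shift_eq: "avg (\<lambda>n. f (Suc n)) = (\<lambda>N. (1 / real N) * (\<Sum>n=1..N. f n))"
proof
  fix N
  have "(\<Sum>n<N. f (Suc n)) = (\<Sum>n=1..N. f n)"
    using sum.atLeast1_atMost_eq[of f N] by simp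
  then show "avg (\<lambda>n. f (Suc n)) N = (1 / real N) * (\<Sum>n=1..N. f n)"
    unfolding avg_def by simp
qed

lemma avg_tendsto_0_if_tendsto_0:
  assumes lim: "d \<longlonglongrightarrow> 0" and nonneg: "\<And>n. d n \<ge> 0"
  shows "avg d \<longlonglongrightarrow> 0"
proof (rule LIMSEQ_I)
  fix r :: real assume r: "0 < r"
  obtain M where M0: "\<And>n. n \<ge> M \<Longrightarrow> norm (d n - 0) < r / 2"
    using LIMSEQ_D[OF lim, of "r / 2"] r by auto
  have M: "d n < r / 2" if "n \<ge> M" for n using M0[OF that] nonneg[of n] by simp
  define S where "S = (\<Sum>n<M. d n)"
  obtain K :: nat where K: "2 * S / r < real K" using reals_Archimedean2 by blast
  have "avg d N < r" if N: "N \<ge> max (Suc M) K" for N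
  proof -
    have S_small: "S < real N * (r / 2)"
    proof -
      have "2 * S / r < real N" using K N by linarith
      then show ?thesis using r by (simp add: field_simps)
    qed
    have "(\<Sum>n<N. d n) = S + (\<Sum>n\<in>{M..<N}. d n)"
      unfolding S_def using N by (simp add: sum.atLeastLessThan_concat[symmetric] lessThan_atLeast0)
    also have "\<dots> \<le> S + (\<Sum>n\<in>{M..<N}. r / 2)"
      using M by (intro add_left_mono sum_mono) (simp add: less_imp_le)
    also have "\<dots> \<le> S + real N * (r / 2)"
      using r by (simp add: mult_right_mono)
    also have "\<dots> < real N * r"
      using S_small by simp
    finally show ?thesis using N unfolding avg_def by (simp add: divide_less_eq mult.commute)
  qed
  moreover have "avg d N \<ge> 0" for N
    unfolding avg_def using nonneg by (simp add: sum_nonneg)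
  ultimately show "\<exists>N0. \<forall>N\<ge>N0. norm (avg d N - 0) < r"
    by (intro exI[of _ "max (Suc M) K"]) auto
qed

lemma avg_tendsto_0_dominated:
  assumes "\<And>n. 0 \<le> d n" "\<And>n. d n \<le> e n" "avg e \<longlonglongrightarrow> 0"
  shows "avg d \<longlonglongrightarrow> 0"
proof (rule tendsto_sandwich[of "\<lambda>_. 0" _ _ "avg e"])
  show "\<forall>\<^sub>F N in sequentially. 0 \<le> avg d N"
    using assms(1) unfolding avg_def by (simp add: sum_nonneg)
  show "\<forall>\<^sub>F N in sequentially. avg d N \<le> avg e N"
    using assms(2) unfolding avg_def by (simp add: sum_mono divide_right_mono)
qed (use assms(3) in auto)

lemma avg_add: "avg (\<lambda>n. d n + e n) N = avg d N + avg e N"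
  unfolding avg_def by (simp add: sum.distrib add_divide_distrib)

(* Markov-type counting: if a nonnegative sequence has null means, the indices
   where it is at least delta have density zero. *)
lemma density_of_large_terms:
  assumes nonneg: "\<And>n. d n \<ge> 0" and lim: "avg d \<longlonglongrightarrow> 0" and "\<delta> > 0"
  shows "(\<lambda>N. real (card {n. n < N \<and> \<delta> \<le> d n}) / real N) \<longlonglongrightarrow> 0"
proof (rule tendsto_sandwich[of "\<lambda>_. 0" _ _ "\<lambda>N. avg d N / \<delta>"])
  have "real (card {n. n < N \<and> \<delta> \<le> d n}) / real N \<le> avg d N / \<delta>" for N
  proof -
    have "\<delta> * real (card {n. n < N \<and> \<delta> \<le> d n}) = (\<Sum>n | n < N \<and> \<delta> \<le> d n. \<delta>)" by simp
    also have "\<dots> \<le> (\<Sum>n | n < N \<and> \<delta> \<le> d n. d n)" by (intro sum_mono) auto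
    also have "\<dots> \<le> (\<Sum>n<N. d n)" using nonneg by (intro sum_mono2) auto
    finally have "real (card {n. n < N \<and> \<delta> \<le> d n}) \<le> (\<Sum>n<N. d n) / \<delta>"
      using \<open>\<delta> > 0\<close> by (simp add: pos_le_divide_eq mult.commute)
    then have "real (card {n. n < N \<and> \<delta> \<le> d n}) / real N \<le> (\<Sum>n<N. d n) / \<delta> / real N"
      by (rule divide_right_mono) simp
    then show ?thesis unfolding avg_def by (simp add: mult.commute)
  qed
  then show "\<forall>\<^sub>F N in sequentially. real (card {n. n < N \<and> \<delta> \<le> d n}) / real N \<le> avg d N / \<delta>"
    by simp
  show "(\<lambda>N. avg d N / \<delta>) \<longlonglongrightarrow> 0"
    using tendsto_divide_zero[OF lim] by simp
qed auto

definition window_count :: "(nat \<Rightarrow> real) \<Rightarrow> real \<Rightarrow> real \<Rightarrow> nat \<Rightarrow> nat" where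
  "window_count s a b N = card {n. n < N \<and> a \<le> s n \<and> s n < b}"

lemma unif_distr_mod1_iff_window_count:
  "unif_distr_mod1 s \<longleftrightarrow> (\<forall>a b. 0 \<le> a \<and> a < b \<and> b \<le> 1 \<longrightarrow>
     (\<lambda>N. real (window_count (\<lambda>n. frac (s n)) a b N) / real N) \<longlonglongrightarrow> b - a)"
  unfolding unif_distr_mod1_def window_count_def ..

(* If t_n lies in [a,b), then either s_n lies in the enlarged window
   [a - delta, b + delta) or s_n and t_n are at least delta apart. *)
lemma window_count_perturb:
  "window_count t a b N \<le> window_count s (a - \<delta>) (b + \<delta>) N + card {n. n < N \<and> \<delta> \<le> \<bar>s n - t n\<bar>}"
proof -
  have "{n. n < N \<and> a \<le> t n \<and> t n < b}
      \<subseteq> {n. n < N \<and> a - \<delta> \<le> s n \<and> s n < b + \<delta>} \<union> {n. n < N \<and> \<delta> \<le> \<bar>s n - t n\<bar>}"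
    by auto
  then have "window_count t a b N \<le> card ({n. n < N \<and> a - \<delta> \<le> s n \<and> s n < b + \<delta>} \<union> {n. n < N \<and> \<delta> \<le> \<bar>s n - t n\<bar>})"
    unfolding window_count_def by (intro card_mono) auto
  also have "\<dots> \<le> window_count s (a - \<delta>) (b + \<delta>) N + card {n. n < N \<and> \<delta> \<le> \<bar>s n - t n\<bar>}"
    unfolding window_count_def by (rule card_Un_le)
  finally show ?thesis .
qed

lemma window_count_clip:
  assumes "\<And>n. 0 \<le> s n \<and> s n < 1"
  shows "window_count s a b N = window_count s (max 0 a) (min 1 b) N"
  unfolding window_count_def using assms by (intro arg_cong[where f = card]) auto

context
  fixes s t :: "nat \<Rightarrow> real"
  assumes s_range: "\<And>n. 0 \<le> s n \<and> s n < 1"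
    and s_equidistributed: "\<And>a b. 0 \<le> a \<Longrightarrow> a < b \<Longrightarrow> b \<le> 1 \<Longrightarrow>
          (\<lambda>N. real (window_count s a b N) / real N) \<longlonglongrightarrow> b - a"
    and rarely_far: "\<And>\<delta>. \<delta> > 0 \<Longrightarrow>
          (\<lambda>N. real (card {n. n < N \<and> \<delta> \<le> \<bar>s n - t n\<bar>}) / real N) \<longlonglongrightarrow> 0"
begin

(* Upper half: t hits [a,b) at most as often as s hits [a,b) enlarged by delta,
   up to the rare indices where t is far from s. *)
lemma window_density_upper:
  assumes "0 \<le> a" "a < b" "b \<le> 1" "b - a < c"
  shows "\<forall>\<^sub>F N in sequentially. real (window_count t a b N) / real N < c"
proof -
  define \<delta> where "\<delta> = (c - (b - a)) / 4"
  define a' where "a' = max 0 (a - \<delta>)"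
  define b' where "b' = min 1 (b + \<delta>)"
  have \<delta>: "\<delta> > 0" unfolding \<delta>_def using assms by simp
  have c_eq: "c = b - a + 4 * \<delta>" unfolding \<delta>_def by (simp add: field_simps)
  have window: "0 \<le> a'" "a' < b'" "b' \<le> 1" "b' - a' \<le> b - a + 2 * \<delta>"
    unfolding a'_def b'_def using assms \<delta> by auto
  have "\<forall>\<^sub>F N in sequentially. real (window_count s a' b' N) / real N < b' - a' + \<delta>
      \<and> real (card {n. n < N \<and> \<delta> \<le> \<bar>s n - t n\<bar>}) / real N < \<delta>"
    using order_tendstoD(2)[OF s_equidistributed[OF window(1-3)], of "b' - a' + \<delta>"]
      order_tendstoD(2)[OF rarely_far[OF \<delta>], of \<delta>] \<delta>
    by (auto intro: eventually_conj)
  then show ?thesis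
  proof (rule eventually_mono)
    fix N
    assume bounds: "real (window_count s a' b' N) / real N < b' - a' + \<delta>
      \<and> real (card {n. n < N \<and> \<delta> \<le> \<bar>s n - t n\<bar>}) / real N < \<delta>"
    have "window_count t a b N \<le> window_count s a' b' N + card {n. n < N \<and> \<delta> \<le> \<bar>s n - t n\<bar>}"
      using window_count_perturb[of t a b N s \<delta>]
        window_count_clip[OF s_range, where a = "a - \<delta>" and b = "b + \<delta>" and N = N]
      unfolding a'_def b'_def by simp
    then have "real (window_count t a b N) / real N
        \<le> real (window_count s a' b' N) / real N + real (card {n. n < N \<and> \<delta> \<le> \<bar>s n - t n\<bar>}) / real N"
      by (simp add: add_divide_distrib[symmetric] divide_right_mono)
    then show "real (window_count t a b N) / real N < c"
      using bounds window(4) c_eq by linarith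
  qed
qed

(* Lower half: s hits [a,b) shrunk by delta at most as often as t hits [a,b),
   up to the same rare indices; short windows are trivial. *)
lemma window_density_lower:
  assumes "0 \<le> a" "a < b" "b \<le> 1" "c < b - a"
  shows "\<forall>\<^sub>F N in sequentially. c < real (window_count t a b N) / real N"
proof (cases "c < 0")
  case True
  then show ?thesis by (intro always_eventually allI) (simp add: less_le_trans[OF True])
next
  case False
  define \<delta> where "\<delta> = (b - a - c) / 4"
  have \<delta>: "\<delta> > 0" unfolding \<delta>_def using assms by simp
  have c_eq: "c = b - a - 4 * \<delta>" unfolding \<delta>_def by (simp add: field_simps)
  have window: "0 \<le> a + \<delta>" "a + \<delta> < b - \<delta>" "b - \<delta> \<le> 1"
    using assms False \<delta> c_eq by linarith+
  have "\<forall>\<^sub>F N in sequentially. b - a - 3 * \<delta> < real (window_count s (a + \<delta>) (b - \<delta>) N) / real N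
      \<and> real (card {n. n < N \<and> \<delta> \<le> \<bar>s n - t n\<bar>}) / real N < \<delta>"
    using order_tendstoD(1)[OF s_equidistributed[OF window], of "b - a - 3 * \<delta>"]
      order_tendstoD(2)[OF rarely_far[OF \<delta>], of \<delta>] \<delta>
    by (auto intro: eventually_conj)
  then show ?thesis
  proof (rule eventually_mono)
    fix N
    assume bounds: "b - a - 3 * \<delta> < real (window_count s (a + \<delta>) (b - \<delta>) N) / real N
      \<and> real (card {n. n < N \<and> \<delta> \<le> \<bar>s n - t n\<bar>}) / real N < \<delta>"
    have "window_count s (a + \<delta>) (b - \<delta>) N \<le> window_count t a b N + card {n. n < N \<and> \<delta> \<le> \<bar>s n - t n\<bar>}"
      using window_count_perturb[of s "a + \<delta>" "b - \<delta>" N t \<delta>] by (simp add: abs_minus_commute)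
    then have "real (window_count s (a + \<delta>) (b - \<delta>) N) / real N
        \<le> real (window_count t a b N) / real N + real (card {n. n < N \<and> \<delta> \<le> \<bar>s n - t n\<bar>}) / real N"
      by (simp add: add_divide_distrib[symmetric] divide_right_mono)
    then show "c < real (window_count t a b N) / real N"
      using bounds c_eq by linarith
  qed
qed

end

lemma unif_distr_mod1_perturb:
  assumes ud: "unif_distr_mod1 s"
    and close: "avg (\<lambda>n. \<bar>frac (s n) - frac (t n)\<bar>) \<longlonglongrightarrow> 0"
  shows "unif_distr_mod1 t"
  unfolding unif_distr_mod1_iff_window_count
proof (intro allI impI)
  fix a b :: real assume ab: "0 \<le> a \<and> a < b \<and> b \<le> 1"
  let ?S = "\<lambda>n. frac (s n)" and ?T = "\<lambda>n. frac (t n)"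
  have S_range: "0 \<le> ?S n \<and> ?S n < 1" for n by (simp add: frac_lt_1)
  have S_equidistributed: "\<And>a b. 0 \<le> a \<Longrightarrow> a < b \<Longrightarrow> b \<le> 1 \<Longrightarrow>
      (\<lambda>N. real (window_count ?S a b N) / real N) \<longlonglongrightarrow> b - a"
    using ud unfolding unif_distr_mod1_iff_window_count by blast
  have rarely_far: "\<And>\<delta>. \<delta> > 0 \<Longrightarrow>
      (\<lambda>N. real (card {n. n < N \<and> \<delta> \<le> \<bar>?S n - ?T n\<bar>}) / real N) \<longlonglongrightarrow> 0"
    by (rule density_of_large_terms[OF _ close]) simp
  show "(\<lambda>N. real (window_count ?T a b N) / real N) \<longlonglongrightarrow> b - a"
    using window_density_lower[OF S_range S_equidistributed rarely_far]
      window_density_upper[OF S_range S_equidistributed rarely_far] ab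
    by (intro order_tendstoI) auto
qed

theorem corollary3p3:
  fixes q :: "nat \<Rightarrow> nat" and x y :: real and E F :: "nat \<Rightarrow> int"
  assumes "basic_seq q"
    and "(\<lambda>N. (1 / real N) * (\<Sum>n=1..N. 1 / real (q n))) \<longlonglongrightarrow> 0"
    and "cantor_expansion q x E"
    and "Q_distribution_normal q x"
    and "cantor_expansion q y F"
    and "(\<lambda>n. \<bar>real_of_int (E n - F n)\<bar> / real (q n)) \<longlonglongrightarrow> 0"
  shows "Q_distribution_normal q y"
proof -
  define gap where "gap n = \<bar>real_of_int (E n - F n)\<bar> / real (q n)" for n
  define bound where "bound n = gap (Suc n) + 1 / real (q (Suc n))" for n
  have dist_le: "\<bar>T_Q q n x - T_Q q n y\<bar> \<le> bound n" for n
    using T_Q_dist_bound[OF assms(1,3,5), of n] unfolding bound_def gap_def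
    by (simp add: add_divide_distrib)
  have "avg (\<lambda>n. gap (Suc n)) \<longlonglongrightarrow> 0"
    using LIMSEQ_Suc[OF assms(6)] unfolding gap_def by (intro avg_tendsto_0_if_tendsto_0) auto
  moreover have "avg (\<lambda>n. 1 / real (q (Suc n))) \<longlonglongrightarrow> 0"
    using assms(2) avg_shift_eq[of "\<lambda>n. 1 / real (q n)"] by simp
  ultimately have "avg bound \<longlonglongrightarrow> 0"
    unfolding bound_def avg_add by (rule tendsto_add_zero)
  then have "avg (\<lambda>n. \<bar>frac (T_Q q n x) - frac (T_Q q n y)\<bar>) \<longlonglongrightarrow> 0"
    by (rule avg_tendsto_0_dominated[rotated 2]) (simp_all add: frac_T_Q dist_le)
  then show ?thesis
    using assms(4) unfolding Q_distribution_normal_def by (rule unif_distr_mod1_perturb[rotated])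
qed

end
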